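(* For every $\gamma\in\mathbb R$ there exists a solution $(X,Y,Z,W)$ of system (S), defined on an interval containing $(-\infty,0]$, such that: (1) $Y(t)>0$ for all $t$; (2) $e^{-2t}|(X,Z,W)(t)-(0,1,0)|$ is bounded as $t\to-\infty$; (3) $e^{-t}|Y(t)|$ is bounded as $t\to-\infty$; (4) $\lim_{t\to-\infty}W/Y^2=1$; (5) $\lim_{t\to-\infty}(1-Z)/Y^2=\gamma$.
   Context: Fix a positive integer $d$ and $q\in\mathbb R$. Put $A_2=d(d+2)$ and $A_3=\tfrac14d(d+2)^2q^2$. System (S) is $$X'=X(dX^2+Z^2-1)+\tfrac{A_2}{d}Y^2-2\tfrac{A_3}{d}W^2,\qquad Y'=Y(dX^2+Z^2-X),$$ $$Z'=Z(dX^2+Z^2-1)+A_3W^2,\qquad W'=W(dX^2+Z^2-2X+Z).$$ *)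

theory Defs
  imports "HOL-Analysis.Analysis"
begin

definition A2 :: "nat \<Rightarrow> real" where
  "A2 d = real d * (real d + 2)"

definition A3 :: "nat \<Rightarrow> real \<Rightarrow> real" where
  "A3 d q = (1/4) * real d * (real d + 2)^2 * q^2"

definition solves_S ::
  "nat \<Rightarrow> real \<Rightarrow> real set \<Rightarrow> (real \<Rightarrow> real) \<Rightarrow> (real \<Rightarrow> real) \<Rightarrow> (real \<Rightarrow> real) \<Rightarrow> (real \<Rightarrow> real) \<Rightarrow> bool" where
  "solves_S d q I X Y Z W \<longleftrightarrow>
     (\<forall>t\<in>I.
       (X has_real_derivative
          (X t * (real d * (X t)^2 + (Z t)^2 - 1) + A2 d / real d * (Y t)^2
           - 2 * A3 d q / real d * (W t)^2)) (at t within I) \<and>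
       (Y has_real_derivative
          (Y t * (real d * (X t)^2 + (Z t)^2 - X t))) (at t within I) \<and>
       (Z has_real_derivative
          (Z t * (real d * (X t)^2 + (Z t)^2 - 1) + A3 d q * (W t)^2)) (at t within I) \<and>
       (W has_real_derivative
          (W t * (real d * (X t)^2 + (Z t)^2 - 2 * X t + Z t))) (at t within I))"

end

theory Submission
  imports Defs
begin

text \<open>
  Blow up the equilibrium \<open>(0, 0, 1, 0)\<close> of (S): with \<open>u = \<kappa> exp t\<close> and \<open>\<beta> = (d + 2)/2\<close> put
  \<open>X = u\<^sup>2 (p + \<beta> e\<^sup>2)\<close>, \<open>Y = u e\<close>, \<open>Z = 1 + u\<^sup>2 z\<close>, \<open>W = u\<^sup>2 w\<close>. Since \<open>d/dt = u d/du\<close>, (S) turns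
  into a system of Briot--Bouquet type \<open>(u\<^sup>2 p)' = u\<^sup>3 G\<^sub>p\<close>, \<open>e' = u G\<^sub>e\<close>, \<open>z' = u G\<^sub>z\<close>,
  \<open>w' = u G\<^sub>w\<close> with a polynomial field \<open>G\<close>. Prescribing \<open>(e, z, w)(0) = (1, -\<gamma>, 1)\<close>, its integrated
  form \<open>u\<^sup>k (y - c) = \<integral>\<^sub>0\<^sup>u s\<^sup>k\<^sup>+\<^sup>1 G(s, y s) ds\<close> (componentwise, \<open>k = 2\<close> for \<open>p\<close> and \<open>k = 0\<close>
  otherwise) is a contraction on continuous functions near \<open>c\<close> over a short interval \<open>[0, \<delta>]\<close>,
  because the right-hand side is \<open>O(u\<^sup>2)\<close>. For the fixed point, \<open>W/Y\<^sup>2 = w/e\<^sup>2 \<rightarrow> 1\<close> and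
  \<open>(1 - Z)/Y\<^sup>2 = -z/e\<^sup>2 \<rightarrow> \<gamma>\<close> as \<open>t \<rightarrow> -\<infinity>\<close>, while \<open>exp (-t) Y = \<kappa> e\<close> and
  \<open>exp (-2t) (X, Z - 1, W) = \<kappa>\<^sup>2 (p + \<beta> e\<^sup>2, z, w)\<close> converge.
\<close>

definition bounded_lipschitz_on :: "'a::metric_space set \<Rightarrow> ('a \<Rightarrow> 'b::metric_space) \<Rightarrow> bool" where
  "bounded_lipschitz_on S f \<longleftrightarrow> bounded (f ` S) \<and> (\<exists>L. L-lipschitz_on S f)"

lemma bounded_lipschitz_on_const: "bounded_lipschitz_on S (\<lambda>x. c)"
proof -
  have "(\<lambda>x. c) ` S \<subseteq> {c}"
    by auto
  then have "bounded ((\<lambda>x. c) ` S)"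
    by (rule bounded_subset[OF finite_imp_bounded, rotated]) simp
  then show ?thesis
    unfolding bounded_lipschitz_on_def using lipschitz_on_constant by blast
qed

lemma bounded_lipschitz_on_bounded_linear:
  assumes "bounded S" "bounded_linear f"
  shows "bounded_lipschitz_on S f"
proof -
  obtain L where "L-lipschitz_on S f"
    using bounded_linear.lipschitz_boundE[OF assms(2)] .
  then show ?thesis
    unfolding bounded_lipschitz_on_def using bounded_linear_image[OF assms] by blast
qed

lemma bounded_lipschitz_on_add:
  fixes f g :: "'a::metric_space \<Rightarrow> 'b::real_normed_vector"
  assumes "bounded_lipschitz_on S f" "bounded_lipschitz_on S g"
  shows "bounded_lipschitz_on S (\<lambda>x. f x + g x)"
  using assms bounded_plus_comp lipschitz_on_add unfolding bounded_lipschitz_on_def by metis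

lemma bounded_lipschitz_on_diff:
  fixes f g :: "'a::metric_space \<Rightarrow> 'b::real_normed_vector"
  assumes "bounded_lipschitz_on S f" "bounded_lipschitz_on S g"
  shows "bounded_lipschitz_on S (\<lambda>x. f x - g x)"
  using assms bounded_minus_comp lipschitz_on_diff unfolding bounded_lipschitz_on_def by metis

lemma bounded_lipschitz_on_mult:
  fixes f g :: "'a::metric_space \<Rightarrow> 'b::real_normed_algebra"
  assumes "bounded_lipschitz_on S f" "bounded_lipschitz_on S g"
  shows "bounded_lipschitz_on S (\<lambda>x. f x * g x)"
proof -
  obtain A Lf where A: "0 < A" "\<And>x. x \<in> S \<Longrightarrow> norm (f x) \<le> A" and Lf: "Lf-lipschitz_on S f"
    using assms(1) unfolding bounded_lipschitz_on_def bounded_pos by auto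
  obtain B Lg where B: "0 < B" "\<And>x. x \<in> S \<Longrightarrow> norm (g x) \<le> B" and Lg: "Lg-lipschitz_on S g"
    using assms(2) unfolding bounded_lipschitz_on_def bounded_pos by auto
  have "norm (f x * g x) \<le> A * B" if "x \<in> S" for x
    using A B(2)[OF that] that
    by (intro order_trans[OF norm_mult_ineq mult_mono]) auto
  then have "bounded ((\<lambda>x. f x * g x) ` S)"
    unfolding bounded_iff by blast
  moreover have "(A * Lg + Lf * B)-lipschitz_on S (\<lambda>x. f x * g x)"
  proof (rule lipschitz_onI)
    fix x y assume x: "x \<in> S" and y: "y \<in> S"
    have "f x * g x - f y * g y = f x * (g x - g y) + (f x - f y) * g y"
      by (simp add: algebra_simps)
    then have "dist (f x * g x) (f y * g y) \<le> norm (f x * (g x - g y)) + norm ((f x - f y) * g y)"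
      unfolding dist_norm by (simp add: norm_triangle_ineq)
    also have "\<dots> \<le> norm (f x) * dist (g x) (g y) + dist (f x) (f y) * norm (g y)"
      unfolding dist_norm by (intro add_mono norm_mult_ineq)
    also have "\<dots> \<le> A * (Lg * dist x y) + (Lf * dist x y) * B"
      using A B(2)[OF y] lipschitz_onD[OF Lf x y] lipschitz_onD[OF Lg x y] lipschitz_on_nonneg[OF Lf]
      by (intro add_mono mult_mono) (auto simp: A(2)[OF x])
    finally show "dist (f x * g x) (f y * g y) \<le> (A * Lg + Lf * B) * dist x y"
      by (simp add: algebra_simps)
  next
    show "0 \<le> A * Lg + Lf * B"
      using A(1) B(1) lipschitz_on_nonneg[OF Lf] lipschitz_on_nonneg[OF Lg] by simp
  qed
  ultimately show ?thesis
    unfolding bounded_lipschitz_on_def by blast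
qed

lemma bounded_lipschitz_on_power:
  fixes f :: "'a::metric_space \<Rightarrow> 'b::real_normed_algebra_1"
  assumes "bounded_lipschitz_on S f"
  shows "bounded_lipschitz_on S (\<lambda>x. f x ^ n)"
proof (induction n)
  case 0
  then show ?case
    using bounded_lipschitz_on_const by simp
next
  case (Suc n)
  then show ?case
    using bounded_lipschitz_on_mult[OF assms Suc.IH] by simp
qed

lemma bounded_lipschitz_on_Pair:
  assumes "bounded_lipschitz_on S f" "bounded_lipschitz_on S g"
  shows "bounded_lipschitz_on S (\<lambda>x. (f x, g x))"
proof -
  have "(\<lambda>x. (f x, g x)) ` S \<subseteq> f ` S \<times> g ` S"
    by auto
  then show ?thesis
    using assms unfolding bounded_lipschitz_on_def
    by (metis bounded_Times bounded_subset lipschitz_on_Pair)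
qed

definition weighted_integral :: "nat \<Rightarrow> (real \<Rightarrow> real) \<Rightarrow> real \<Rightarrow> real" where
  "weighted_integral k h u = integral {0..u} (\<lambda>s. s ^ (k + 1) * h s) / u ^ k"

lemma abs_weighted_integral_le:
  assumes "0 \<le> u" "continuous_on {0..u} h" "\<And>s. s \<in> {0..u} \<Longrightarrow> \<bar>h s\<bar> \<le> B"
  shows "\<bar>weighted_integral k h u\<bar> \<le> u\<^sup>2 * B"
proof (cases "u = 0")
  case True
  then show ?thesis
    by (simp add: weighted_integral_def)
next
  case False
  have "0 \<le> B"
    using assms(1) assms(3)[of 0] by fastforce
  have "norm (integral {0..u} (\<lambda>s. s ^ (k + 1) * h s)) \<le> u ^ (k + 1) * B * (u - 0)"
  proof (rule integral_bound)
    show "continuous_on {0..u} (\<lambda>s. s ^ (k + 1) * h s)"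
      using assms(2) by (intro continuous_intros)
    fix s assume s: "s \<in> {0..u}"
    then have "\<bar>s ^ (k + 1)\<bar> \<le> u ^ (k + 1)"
      using power_mono[of s u "k + 1"] by simp
    then show "norm (s ^ (k + 1) * h s) \<le> u ^ (k + 1) * B"
      using assms(3)[OF s] \<open>0 \<le> B\<close> by (simp add: abs_mult mult_mono')
  qed (use assms in auto)
  also have "\<dots> = u\<^sup>2 * B * u ^ k"
    by (simp add: power2_eq_square algebra_simps)
  finally show ?thesis
    using False assms(1) by (simp add: weighted_integral_def divide_le_eq)
qed

lemma weighted_integral_diff:
  assumes "continuous_on {0..u} h" "continuous_on {0..u} g"
  shows "weighted_integral k h u - weighted_integral k g u = weighted_integral k (\<lambda>s. h s - g s) u"
proof -
  have "(\<lambda>s. s ^ (k + 1) * h s) integrable_on {0..u}" "(\<lambda>s. s ^ (k + 1) * g s) integrable_on {0..u}"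
    using assms by (auto intro!: integrable_continuous_interval continuous_intros)
  then show ?thesis
    by (simp only: weighted_integral_def right_diff_distrib integral_diff diff_divide_distrib)
qed

lemma continuous_on_weighted_integral:
  assumes "continuous_on {0..\<delta>} h"
  shows "continuous_on {0..\<delta>} (weighted_integral k h)"
  unfolding continuous_on_eq_continuous_within
proof
  fix u assume u: "u \<in> {0..\<delta>}"
  show "continuous (at u within {0..\<delta>}) (weighted_integral k h)"
  proof (cases "u = 0")
    case False
    have "continuous_on {0..\<delta>} (\<lambda>v. integral {0..v} (\<lambda>s. s ^ (k + 1) * h s))"
      using assms by (intro indefinite_integral_continuous_1 integrable_continuous_interval continuous_intros)
    then show ?thesis
      using u False unfolding weighted_integral_def[abs_def]
      by (intro continuous_intros) (auto simp: continuous_on_eq_continuous_within)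
  next
    case True
    have "bounded (h ` {0..\<delta>})"
      by (intro compact_imp_bounded compact_continuous_image assms compact_Icc)
    then obtain B where B: "\<forall>s\<in>{0..\<delta>}. \<bar>h s\<bar> \<le> B"
      unfolding bounded_iff by auto
    have "norm (weighted_integral k h v) \<le> v\<^sup>2 * B" if "v \<in> {0..\<delta>}" for v
      unfolding real_norm_def using that B
      by (intro abs_weighted_integral_le) (auto intro: continuous_on_subset[OF assms])
    then have "\<forall>\<^sub>F v in at 0 within {0..\<delta>}. norm (weighted_integral k h v) \<le> v\<^sup>2 * B"
      by (simp add: eventually_at_filter)
    then have "(weighted_integral k h \<longlongrightarrow> 0) (at 0 within {0..\<delta>})"
      by (rule Lim_null_comparison) (auto intro!: tendsto_eq_intros)
    then show ?thesis
      using True by (simp add: continuous_within weighted_integral_def)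
  qed
qed

lemma weighted_integral_has_derivative:
  assumes "continuous_on {0..\<delta>} h" "u \<in> {0<..<\<delta>}"
  shows "((\<lambda>v. v ^ k * weighted_integral k h v) has_real_derivative u ^ (k + 1) * h u) (at u)"
proof -
  have "((\<lambda>v. integral {0..v} (\<lambda>s. s ^ (k + 1) * h s)) has_real_derivative u ^ (k + 1) * h u)
      (at u within {0..\<delta>})"
    using assms by (intro integral_has_real_derivative continuous_intros) auto
  moreover have "at u within {0..\<delta>} = at u"
    using assms(2) by (intro at_within_interior) simp
  ultimately have "((\<lambda>v. integral {0..v} (\<lambda>s. s ^ (k + 1) * h s)) has_real_derivative u ^ (k + 1) * h u)
      (at u)"
    by simp
  then show ?thesis
    by (rule has_field_derivative_transform_within_open[of _ _ _ "{0<..<\<delta>}"])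
      (use assms(2) in \<open>auto simp: weighted_integral_def\<close>)
qed

definition singular_picard_map ::
    "('a \<Rightarrow> nat) \<Rightarrow> (real \<times> 'a \<Rightarrow> 'a) \<Rightarrow> 'a \<Rightarrow> (real \<Rightarrow> 'a) \<Rightarrow> real \<Rightarrow> 'a::euclidean_space" where
  "singular_picard_map k F c y u =
     c + (\<Sum>b\<in>Basis. weighted_integral (k b) (\<lambda>s. F (s, y s) \<bullet> b) u *\<^sub>R b)"

lemma clamp_comp_in_bcontfun:
  fixes g :: "real \<Rightarrow> 'b::metric_space"
  assumes "continuous_on {a..b} g"
  shows "(\<lambda>u. g (clamp a b u)) \<in> bcontfun"
proof -
  have "bounded (g ` cbox a b)"
    using assms by (intro compact_imp_bounded compact_continuous_image) auto
  then show ?thesis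
    using assms unfolding bcontfun_def by (auto intro: clamp_continuous_on clamp_bounded)
qed

lemma closed_bcontfun_range_subset:
  assumes "closed K"
  shows "closed {f :: 'a::metric_space \<Rightarrow>\<^sub>C 'b::metric_space. \<forall>u. f u \<in> K}"
proof -
  have "continuous_on UNIV (\<lambda>f :: 'a \<Rightarrow>\<^sub>C 'b. f u)" for u
    by (rule lipschitz_on_continuous_on[of 1], rule lipschitz_onI) (simp_all add: dist_bounded)
  then have "closed ((\<lambda>f :: 'a \<Rightarrow>\<^sub>C 'b. f u) -` K)" for u
    using assms by (simp add: continuous_on_closed_vimage)
  then have "closed (\<Inter>u. (\<lambda>f :: 'a \<Rightarrow>\<^sub>C 'b. f u) -` K)"
    by blast
  moreover have "(\<Inter>u. (\<lambda>f :: 'a \<Rightarrow>\<^sub>C 'b. f u) -` K) = {f :: 'a \<Rightarrow>\<^sub>C 'b. \<forall>u. f u \<in> K}"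
    by auto
  ultimately show ?thesis
    by simp
qed

lemma singular_picard_map_component:
  assumes "b \<in> Basis"
  shows "(singular_picard_map k F c y u - c) \<bullet> b = weighted_integral (k b) (\<lambda>s. F (s, y s) \<bullet> b) u"
  using assms by (simp add: singular_picard_map_def inner_sum_left mult.commute)

context
  fixes F :: "real \<times> 'a::euclidean_space \<Rightarrow> 'a" and c :: 'a and r M L \<delta> :: real and k :: "'a \<Rightarrow> nat"
  assumes F_bound: "\<And>x. x \<in> {0..1} \<times> cball c r \<Longrightarrow> norm (F x) \<le> M"
    and F_lipschitz: "L-lipschitz_on ({0..1} \<times> cball c r) F"
    and \<delta>_le_1: "\<delta> \<le> 1"
begin

lemma continuous_on_field_along:
  assumes "continuous_on {0..\<delta>} y" "\<And>s. s \<in> {0..\<delta>} \<Longrightarrow> y s \<in> cball c r"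
  shows "continuous_on {0..\<delta>} (\<lambda>s. F (s, y s) \<bullet> b)"
proof -
  have "continuous_on ({0..1} \<times> cball c r) F"
    using F_lipschitz by (rule lipschitz_on_continuous_on)
  moreover have "continuous_on {0..\<delta>} (\<lambda>s. (s, y s))"
    using assms(1) by (intro continuous_intros)
  moreover have "(\<lambda>s. (s, y s)) ` {0..\<delta>} \<subseteq> {0..1} \<times> cball c r"
    using assms(2) \<delta>_le_1 by auto
  ultimately have "continuous_on {0..\<delta>} (\<lambda>s. F (s, y s))"
    by (rule continuous_on_compose2)
  then show ?thesis
    by (intro continuous_intros)
qed

lemma continuous_on_singular_picard_map:
  assumes "continuous_on {0..\<delta>} y" "\<And>s. s \<in> {0..\<delta>} \<Longrightarrow> y s \<in> cball c r"
  shows "continuous_on {0..\<delta>} (singular_picard_map k F c y)"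
proof -
  have "continuous_on {0..\<delta>} (weighted_integral (k b) (\<lambda>s. F (s, y s) \<bullet> b))" for b
    using assms by (intro continuous_on_weighted_integral continuous_on_field_along)
  then show ?thesis
    unfolding singular_picard_map_def by (intro continuous_intros)
qed

lemma norm_singular_picard_map_diff_le:
  assumes "continuous_on {0..\<delta>} y" "\<And>s. s \<in> {0..\<delta>} \<Longrightarrow> y s \<in> cball c r" "u \<in> {0..\<delta>}"
  shows "norm (singular_picard_map k F c y u - c) \<le> real DIM('a) * \<delta>\<^sup>2 * M"
proof -
  have "norm (F (0, y 0)) \<le> M"
    using assms F_bound \<delta>_le_1 by auto
  then have "0 \<le> M"
    by (rule order_trans[OF norm_ge_zero])
  have "\<bar>(singular_picard_map k F c y u - c) \<bullet> b\<bar> \<le> \<delta>\<^sup>2 * M" if b: "b \<in> Basis" for b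
  proof -
    have "\<bar>F (s, y s) \<bullet> b\<bar> \<le> M" if "s \<in> {0..u}" for s
      using that assms \<delta>_le_1 F_bound[of "(s, y s)"] Basis_le_norm[OF b, of "F (s, y s)"] by auto
    then have "\<bar>(singular_picard_map k F c y u - c) \<bullet> b\<bar> \<le> u\<^sup>2 * M"
      unfolding singular_picard_map_component[OF b] using assms
      by (intro abs_weighted_integral_le) (auto intro: continuous_on_subset[OF continuous_on_field_along])
    also have "\<dots> \<le> \<delta>\<^sup>2 * M"
      using assms \<open>0 \<le> M\<close> by (intro mult_right_mono power_mono) auto
    finally show ?thesis .
  qed
  then have "(\<Sum>b\<in>Basis. \<bar>(singular_picard_map k F c y u - c) \<bullet> b\<bar>) \<le> real DIM('a) * (\<delta>\<^sup>2 * M)"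
    by (intro sum_bounded_above) auto
  then show ?thesis
    using norm_le_l1[of "singular_picard_map k F c y u - c"] by simp
qed

lemma dist_singular_picard_map_le:
  assumes "continuous_on {0..\<delta>} y" "\<And>s. s \<in> {0..\<delta>} \<Longrightarrow> y s \<in> cball c r"
    and "continuous_on {0..\<delta>} y'" "\<And>s. s \<in> {0..\<delta>} \<Longrightarrow> y' s \<in> cball c r"
    and "\<And>s. s \<in> {0..\<delta>} \<Longrightarrow> dist (y s) (y' s) \<le> e" "u \<in> {0..\<delta>}"
  shows "dist (singular_picard_map k F c y u) (singular_picard_map k F c y' u) \<le> real DIM('a) * \<delta>\<^sup>2 * (L * e)"
proof -
  let ?P = "singular_picard_map k F c"
  have "0 \<in> {0..\<delta>}"
    using assms(6) by simp
  then have "0 \<le> e"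
    by (rule order_trans[OF zero_le_dist assms(5)])
  then have "0 \<le> L * e"
    using lipschitz_on_nonneg[OF F_lipschitz] by simp
  have "\<bar>(?P y u - ?P y' u) \<bullet> b\<bar> \<le> \<delta>\<^sup>2 * (L * e)" if b: "b \<in> Basis" for b
  proof -
    have F_diff: "\<bar>F (s, y s) \<bullet> b - F (s, y' s) \<bullet> b\<bar> \<le> L * e" if s: "s \<in> {0..u}" for s
    proof -
      have "\<bar>F (s, y s) \<bullet> b - F (s, y' s) \<bullet> b\<bar> \<le> dist (F (s, y s)) (F (s, y' s))"
        using Basis_le_norm[OF b, of "F (s, y s) - F (s, y' s)"] by (simp add: dist_norm inner_diff_left)
      also have "\<dots> \<le> L * dist (s, y s) (s, y' s)"
        using s assms \<delta>_le_1 by (intro lipschitz_onD[OF F_lipschitz]) auto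
      also have "\<dots> \<le> L * e"
        using s assms lipschitz_on_nonneg[OF F_lipschitz] by (intro mult_left_mono) (auto simp: dist_Pair_Pair)
      finally show ?thesis .
    qed
    have "(?P y u - ?P y' u) \<bullet> b = (?P y u - c) \<bullet> b - (?P y' u - c) \<bullet> b"
      by (simp add: inner_diff_left)
    also have "\<dots> = weighted_integral (k b) (\<lambda>s. F (s, y s) \<bullet> b - F (s, y' s) \<bullet> b) u"
      unfolding singular_picard_map_component[OF b] using assms
      by (intro weighted_integral_diff) (auto intro: continuous_on_subset[OF continuous_on_field_along])
    moreover have "continuous_on {0..\<delta>} (\<lambda>s. F (s, y s) \<bullet> b - F (s, y' s) \<bullet> b)"
      using assms by (intro continuous_on_diff continuous_on_field_along)
    ultimately have "\<bar>(?P y u - ?P y' u) \<bullet> b\<bar> \<le> u\<^sup>2 * (L * e)"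
      using assms(6) F_diff
      by (simp only:) (rule abs_weighted_integral_le; auto elim: continuous_on_subset)
    also have "\<dots> \<le> \<delta>\<^sup>2 * (L * e)"
      using assms(6) \<open>0 \<le> L * e\<close> by (intro mult_right_mono power_mono) auto
    finally show ?thesis .
  qed
  then have "(\<Sum>b\<in>Basis. \<bar>(?P y u - ?P y' u) \<bullet> b\<bar>) \<le> real DIM('a) * (\<delta>\<^sup>2 * (L * e))"
    by (intro sum_bounded_above) auto
  then show ?thesis
    using norm_le_l1[of "?P y u - ?P y' u"] by (simp add: dist_norm)
qed

lemma singular_picard_map_has_fixpoint:
  assumes "0 \<le> r" "0 \<le> \<delta>" "real DIM('a) * \<delta>\<^sup>2 * M \<le> r" "real DIM('a) * \<delta>\<^sup>2 * L \<le> 1/2"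
  obtains y where "continuous_on UNIV y" "\<And>u. y u \<in> cball c r"
    "\<And>u. u \<in> {0..\<delta>} \<Longrightarrow> singular_picard_map k F c y u = y u"
proof -
  let ?P = "singular_picard_map k F c"
  txt \<open>Functions on \<open>[0, \<delta>]\<close> are extended to all of \<open>\<real>\<close> by clamping, so that the contraction
    lives on the complete space of bounded continuous functions.\<close>
  define S where "S = {f :: real \<Rightarrow>\<^sub>C 'a. \<forall>u. f u \<in> cball c r}"
  define T where "T f = Bcontfun (\<lambda>u. ?P f (clamp 0 \<delta> u))" for f :: "real \<Rightarrow>\<^sub>C 'a"
  have clamp: "clamp 0 \<delta> u \<in> {0..\<delta>}" for u
    using clamp_in_interval[of 0 \<delta> u] assms(2) by simp
  have T_apply: "T f u = ?P f (clamp 0 \<delta> u)" if "f \<in> S" for f u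
  proof -
    have "continuous_on {0..\<delta>} (?P f)"
      using that by (intro continuous_on_singular_picard_map) (auto simp: S_def)
    then show ?thesis
      unfolding T_def by (simp add: Bcontfun_inverse clamp_comp_in_bcontfun)
  qed
  have "T f \<in> S" if "f \<in> S" for f
  proof -
    have "norm (?P f (clamp 0 \<delta> u) - c) \<le> r" for u
      using that clamp assms(3) by (intro order_trans[OF norm_singular_picard_map_diff_le]) (auto simp: S_def)
    then show ?thesis
      using that T_apply by (simp add: S_def dist_norm norm_minus_commute)
  qed
  then have "T ` S \<subseteq> S"
    by blast
  moreover have "dist (T f) (T f') \<le> 1/2 * dist f f'" if "f \<in> S" "f' \<in> S" for f f'
  proof (rule dist_bound)
    fix u
    have "dist (T f u) (T f' u) \<le> real DIM('a) * \<delta>\<^sup>2 * (L * dist f f')"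
      using that clamp unfolding T_apply[OF that(1)] T_apply[OF that(2)]
      by (intro dist_singular_picard_map_le) (auto simp: S_def dist_bounded)
    also have "\<dots> \<le> 1/2 * dist f f'"
      using mult_right_mono[OF assms(4) zero_le_dist[of f f']] by (simp add: mult.assoc)
    finally show "dist (T f u) (T f' u) \<le> 1/2 * dist f f'" .
  qed
  moreover have "complete S"
    unfolding S_def by (rule complete_closed_subset[OF closed_bcontfun_range_subset subset_UNIV complete_UNIV]) simp
  moreover have "const_bcontfun c \<in> S"
    using assms by (simp add: S_def const_bcontfun.rep_eq)
  ultimately obtain f where f: "f \<in> S" "T f = f"
    using Banach_fix[of S "1/2" T] by auto
  have "?P f u = f u" if "u \<in> {0..\<delta>}" for u
    using that T_apply[OF f(1), of u] f(2) by simp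
  then show ?thesis
    using that[of f] f(1) by (auto simp: S_def)
qed

end

lemma singular_system_local_solution:
  fixes F :: "real \<times> 'a::euclidean_space \<Rightarrow> 'a" and k :: "'a \<Rightarrow> nat"
  assumes "0 < r" "bounded_lipschitz_on ({0..1} \<times> cball c r) F"
  obtains \<delta> y where "0 < \<delta>" "continuous_on UNIV y" "y 0 = c" "\<And>u. y u \<in> cball c r"
    "\<And>u b. u \<in> {0<..<\<delta>} \<Longrightarrow> b \<in> Basis \<Longrightarrow>
       ((\<lambda>v. v ^ k b * ((y v - c) \<bullet> b)) has_real_derivative u ^ (k b + 1) * (F (u, y u) \<bullet> b)) (at u)"
proof -
  obtain M L where M: "\<And>x. x \<in> {0..1} \<times> cball c r \<Longrightarrow> norm (F x) \<le> M"
    and L: "L-lipschitz_on ({0..1} \<times> cball c r) F"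
    using assms(2) unfolding bounded_lipschitz_on_def bounded_iff by auto
  have "((\<lambda>\<delta>. \<delta>) \<longlongrightarrow> 0) (at_right (0::real))"
    "((\<lambda>\<delta>. real DIM('a) * \<delta>\<^sup>2 * M) \<longlongrightarrow> 0) (at_right 0)"
    "((\<lambda>\<delta>. real DIM('a) * \<delta>\<^sup>2 * L) \<longlongrightarrow> 0) (at_right 0)"
    by (auto intro!: tendsto_eq_intros)
  then have "\<forall>\<^sub>F \<delta> in at_right (0::real). 0 < \<delta> \<and> \<delta> < 1 \<and> real DIM('a) * \<delta>\<^sup>2 * M < r \<and> real DIM('a) * \<delta>\<^sup>2 * L < 1/2"
    using assms(1) by (intro eventually_conj eventually_at_right_less order_tendstoD(2)) auto
  then obtain \<delta> where \<delta>: "0 < \<delta>" "\<delta> < 1" "real DIM('a) * \<delta>\<^sup>2 * M < r" "real DIM('a) * \<delta>\<^sup>2 * L < 1/2"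
    using eventually_happens[of _ "at_right (0::real)"] by auto
  obtain y where y: "continuous_on UNIV y" "\<And>u. y u \<in> cball c r"
    and fixpoint: "\<And>u. u \<in> {0..\<delta>} \<Longrightarrow> singular_picard_map k F c y u = y u"
    by (rule singular_picard_map_has_fixpoint[OF M L, of \<delta> k]) (use assms(1) \<delta> in auto)
  have component: "(y u - c) \<bullet> b = weighted_integral (k b) (\<lambda>s. F (s, y s) \<bullet> b) u"
    if "u \<in> {0..\<delta>}" "b \<in> Basis" for u b
    using singular_picard_map_component[OF that(2), of k F c y u] fixpoint[OF that(1)] by simp
  show ?thesis
  proof (rule that[OF \<delta>(1) y(1) _ y(2)])
    have "(y 0 - c) \<bullet> b = 0" if "b \<in> Basis" for b
      using component[OF _ that, of 0] \<delta> by (simp add: weighted_integral_def)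
    then show "y 0 = c"
      by (metis euclidean_all_zero_iff right_minus_eq)
  next
    fix u and b :: 'a assume u: "u \<in> {0<..<\<delta>}" and b: "b \<in> Basis"
    have "continuous_on {0..\<delta>} (\<lambda>s. F (s, y s) \<bullet> b)"
      using M L y \<delta> by (intro continuous_on_field_along) (auto intro: continuous_on_subset)
    from weighted_integral_has_derivative[OF this u, of "k b"]
    show "((\<lambda>v. v ^ k b * ((y v - c) \<bullet> b)) has_real_derivative u ^ (k b + 1) * (F (u, y u) \<bullet> b)) (at u)"
      by (rule has_field_derivative_transform_within_open[of _ _ _ "{0<..<\<delta>}"])
        (use u b component in auto)
  qed
qed

definition blowup_coeff :: "nat \<Rightarrow> real" where
  "blowup_coeff d = (real d + 2) / 2"

definition rescaled_X :: "nat \<Rightarrow> real \<Rightarrow> real \<Rightarrow> real" where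
  "rescaled_X d p e = p + blowup_coeff d * e\<^sup>2"

text \<open>After the blow-up, \<open>d X\<^sup>2 + Z\<^sup>2 - 1 = u\<^sup>2 \<cdot> rescaled_rate d u p e z\<close>.\<close>

definition rescaled_rate :: "nat \<Rightarrow> real \<Rightarrow> real \<Rightarrow> real \<Rightarrow> real \<Rightarrow> real" where
  "rescaled_rate d u p e z = 2 * z + u\<^sup>2 * (real d * (rescaled_X d p e)\<^sup>2 + z\<^sup>2)"

definition desingularized_field ::
    "nat \<Rightarrow> real \<Rightarrow> real \<times> real \<times> real \<times> real \<times> real \<Rightarrow> real \<times> real \<times> real \<times> real" where
  "desingularized_field d q = (\<lambda>(u, p, e, z, w).
     (let x = rescaled_X d p e; g = rescaled_rate d u p e z in
       (g * (x - 2 * blowup_coeff d * e\<^sup>2) + 2 * blowup_coeff d * x * e\<^sup>2 - 2 * A3 d q / real d * w\<^sup>2,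
        e * (g - x),
        real d * x\<^sup>2 + z\<^sup>2 + z * g + A3 d q * w\<^sup>2,
        w * (g - 2 * x + z))))"

lemma bounded_lipschitz_on_desingularized_field:
  assumes "bounded S"
  shows "bounded_lipschitz_on S (desingularized_field d q)"
  unfolding desingularized_field_def split_beta Let_def rescaled_rate_def rescaled_X_def
  by (intro bounded_lipschitz_on_Pair bounded_lipschitz_on_add bounded_lipschitz_on_diff
      bounded_lipschitz_on_mult bounded_lipschitz_on_power bounded_lipschitz_on_const
      bounded_lipschitz_on_bounded_linear[OF assms]
      bounded_linear_fst_comp bounded_linear_snd_comp bounded_linear_ident)

definition rhs_X :: "nat \<Rightarrow> real \<Rightarrow> real \<Rightarrow> real \<Rightarrow> real \<Rightarrow> real \<Rightarrow> real" where
  "rhs_X d q x y z w = x * (real d * x\<^sup>2 + z\<^sup>2 - 1) + A2 d / real d * y\<^sup>2 - 2 * A3 d q / real d * w\<^sup>2"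

definition rhs_Y :: "nat \<Rightarrow> real \<Rightarrow> real \<Rightarrow> real \<Rightarrow> real" where
  "rhs_Y d x y z = y * (real d * x\<^sup>2 + z\<^sup>2 - x)"

definition rhs_Z :: "nat \<Rightarrow> real \<Rightarrow> real \<Rightarrow> real \<Rightarrow> real \<Rightarrow> real" where
  "rhs_Z d q x z w = z * (real d * x\<^sup>2 + z\<^sup>2 - 1) + A3 d q * w\<^sup>2"

definition rhs_W :: "nat \<Rightarrow> real \<Rightarrow> real \<Rightarrow> real \<Rightarrow> real" where
  "rhs_W d x z w = w * (real d * x\<^sup>2 + z\<^sup>2 - 2 * x + z)"

lemma solves_S_iff:
  "solves_S d q I X Y Z W \<longleftrightarrow>
     (\<forall>t\<in>I. (X has_real_derivative rhs_X d q (X t) (Y t) (Z t) (W t)) (at t within I) \<and>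
       (Y has_real_derivative rhs_Y d (X t) (Y t) (Z t)) (at t within I) \<and>
       (Z has_real_derivative rhs_Z d q (X t) (Z t) (W t)) (at t within I) \<and>
       (W has_real_derivative rhs_W d (X t) (Z t) (W t)) (at t within I))"
  unfolding solves_S_def rhs_X_def rhs_Y_def rhs_Z_def rhs_W_def ..

context
  fixes d :: nat and q u p e z w :: real
begin

lemma rhs_X_blowup:
  assumes "d > 0"
  shows "rhs_X d q (u\<^sup>2 * rescaled_X d p e) (u * e) (1 + u\<^sup>2 * z) (u\<^sup>2 * w) =
    u * (u ^ 3 * fst (desingularized_field d q (u, p, e, z, w))
      + blowup_coeff d * (2 * (u * e) * (e + u * (u * fst (snd (desingularized_field d q (u, p, e, z, w)))))))"
proof -
  have A2: "A2 d / real d = 2 * blowup_coeff d"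
    using assms by (simp add: A2_def blowup_coeff_def)
  show ?thesis
    unfolding rhs_X_def desingularized_field_def rescaled_rate_def rescaled_X_def Let_def prod.case fst_conv snd_conv A2
    by algebra
qed

lemma rhs_Y_blowup:
  "rhs_Y d (u\<^sup>2 * rescaled_X d p e) (u * e) (1 + u\<^sup>2 * z) =
    u * (e + u * (u * fst (snd (desingularized_field d q (u, p, e, z, w)))))"
  unfolding rhs_Y_def desingularized_field_def rescaled_rate_def rescaled_X_def Let_def prod.case fst_conv snd_conv
  by algebra

lemma rhs_Z_blowup:
  "rhs_Z d q (u\<^sup>2 * rescaled_X d p e) (1 + u\<^sup>2 * z) (u\<^sup>2 * w) =
    u * (2 * u * z + u\<^sup>2 * (u * fst (snd (snd (desingularized_field d q (u, p, e, z, w))))))"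
  unfolding rhs_Z_def desingularized_field_def rescaled_rate_def rescaled_X_def Let_def prod.case fst_conv snd_conv
  by algebra

lemma rhs_W_blowup:
  "rhs_W d (u\<^sup>2 * rescaled_X d p e) (1 + u\<^sup>2 * z) (u\<^sup>2 * w) =
    u * (2 * u * w + u\<^sup>2 * (u * snd (snd (snd (desingularized_field d q (u, p, e, z, w))))))"
  unfolding rhs_W_def desingularized_field_def rescaled_rate_def rescaled_X_def Let_def prod.case fst_conv snd_conv
  by algebra

end

definition blowup_X :: "nat \<Rightarrow> (real \<Rightarrow> real) \<Rightarrow> (real \<Rightarrow> real) \<Rightarrow> real \<Rightarrow> real" where
  "blowup_X d p e u = u\<^sup>2 * rescaled_X d (p u) (e u)"

definition blowup_Y :: "(real \<Rightarrow> real) \<Rightarrow> real \<Rightarrow> real" where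
  "blowup_Y e u = u * e u"

definition blowup_Z :: "(real \<Rightarrow> real) \<Rightarrow> real \<Rightarrow> real" where
  "blowup_Z z u = 1 + u\<^sup>2 * z u"

definition blowup_W :: "(real \<Rightarrow> real) \<Rightarrow> real \<Rightarrow> real" where
  "blowup_W w u = u\<^sup>2 * w u"

lemma blowup_has_derivatives:
  fixes d :: nat and q u :: real and p e z w :: "real \<Rightarrow> real"
  defines "G \<equiv> desingularized_field d q (u, p u, e u, z u, w u)"
  assumes "d > 0" "u \<noteq> 0"
    and dp: "((\<lambda>v. v\<^sup>2 * p v) has_real_derivative u ^ 3 * fst G) (at u)"
    and de: "(e has_real_derivative u * fst (snd G)) (at u)"
    and dz: "(z has_real_derivative u * fst (snd (snd G))) (at u)"
    and dw: "(w has_real_derivative u * snd (snd (snd G))) (at u)"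
  shows "(blowup_X d p e has_real_derivative
           rhs_X d q (blowup_X d p e u) (blowup_Y e u) (blowup_Z z u) (blowup_W w u) / u) (at u)"
    and "(blowup_Y e has_real_derivative rhs_Y d (blowup_X d p e u) (blowup_Y e u) (blowup_Z z u) / u) (at u)"
    and "(blowup_Z z has_real_derivative rhs_Z d q (blowup_X d p e u) (blowup_Z z u) (blowup_W w u) / u) (at u)"
    and "(blowup_W w has_real_derivative rhs_W d (blowup_X d p e u) (blowup_Z z u) (blowup_W w u) / u) (at u)"
proof -
  have dY: "(blowup_Y e has_real_derivative e u + u * (u * fst (snd G))) (at u)"
    unfolding blowup_Y_def[abs_def] by (rule derivative_eq_intros de refl | simp)+
  then show "(blowup_Y e has_real_derivative rhs_Y d (blowup_X d p e u) (blowup_Y e u) (blowup_Z z u) / u) (at u)"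
    using assms(3) rhs_Y_blowup[where d = d and q = q and u = u and p = "p u" and e = "e u" and z = "z u" and w = "w u"]
    by (simp add: blowup_X_def blowup_Y_def blowup_Z_def G_def)
  have "(blowup_Z z has_real_derivative 2 * u * z u + u\<^sup>2 * (u * fst (snd (snd G)))) (at u)"
    unfolding blowup_Z_def[abs_def] by (rule derivative_eq_intros dz refl | simp)+
  then show "(blowup_Z z has_real_derivative rhs_Z d q (blowup_X d p e u) (blowup_Z z u) (blowup_W w u) / u) (at u)"
    using assms(3) rhs_Z_blowup[where d = d and q = q and u = u and p = "p u" and e = "e u" and z = "z u" and w = "w u"]
    by (simp add: blowup_X_def blowup_Z_def blowup_W_def G_def)
  have "(blowup_W w has_real_derivative 2 * u * w u + u\<^sup>2 * (u * snd (snd (snd G)))) (at u)"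
    unfolding blowup_W_def[abs_def] by (rule derivative_eq_intros dw refl | simp)+
  then show "(blowup_W w has_real_derivative rhs_W d (blowup_X d p e u) (blowup_Z z u) (blowup_W w u) / u) (at u)"
    using assms(3) rhs_W_blowup[where d = d and q = q and u = u and p = "p u" and e = "e u" and z = "z u" and w = "w u"]
    by (simp add: blowup_X_def blowup_Z_def blowup_W_def G_def)
  have "blowup_X d p e = (\<lambda>v. v\<^sup>2 * p v + blowup_coeff d * (blowup_Y e v)\<^sup>2)"
    by (simp add: fun_eq_iff blowup_X_def blowup_Y_def rescaled_X_def algebra_simps power_mult_distrib)
  moreover have "((\<lambda>v. v\<^sup>2 * p v + blowup_coeff d * (blowup_Y e v)\<^sup>2) has_real_derivative
      u ^ 3 * fst G + blowup_coeff d * (2 * (u * e u) * (e u + u * (u * fst (snd G))))) (at u)"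
    by (rule derivative_eq_intros dp dY refl | simp add: blowup_Y_def)+
  ultimately have "(blowup_X d p e has_real_derivative
      u ^ 3 * fst G + blowup_coeff d * (2 * (u * e u) * (e u + u * (u * fst (snd G))))) (at u)"
    by simp
  then show "(blowup_X d p e has_real_derivative
      rhs_X d q (blowup_X d p e u) (blowup_Y e u) (blowup_Z z u) (blowup_W w u) / u) (at u)"
    using assms(2,3) rhs_X_blowup[where d = d and q = q and u = u and p = "p u" and e = "e u" and z = "z u" and w = "w u"]
    by (simp add: blowup_X_def blowup_Y_def blowup_Z_def blowup_W_def G_def)
qed

lemma exp_time_change_has_derivative:
  assumes "(f has_real_derivative D / (\<kappa> * exp t)) (at (\<kappa> * exp t))" "\<kappa> \<noteq> 0"
  shows "((\<lambda>t. f (\<kappa> * exp t)) has_real_derivative D) (at t within I)"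
proof -
  have "((\<lambda>t. \<kappa> * exp t) has_real_derivative \<kappa> * exp t) (at t)"
    by (auto intro!: derivative_eq_intros)
  from DERIV_chain2[OF assms(1) this] have "((\<lambda>t. f (\<kappa> * exp t)) has_real_derivative D) (at t)"
    using assms(2) by simp
  then show ?thesis
    by (rule has_field_derivative_at_within)
qed

lemma solves_S_blowup:
  fixes d :: nat and q \<kappa> \<delta> :: real and p e z w :: "real \<Rightarrow> real"
  defines "G u \<equiv> desingularized_field d q (u, p u, e u, z u, w u)"
  assumes "d > 0" "0 < \<kappa>" "\<kappa> < \<delta>"
    and "\<And>u. u \<in> {0<..<\<delta>} \<Longrightarrow> ((\<lambda>v. v\<^sup>2 * p v) has_real_derivative u ^ 3 * fst (G u)) (at u)"
    and "\<And>u. u \<in> {0<..<\<delta>} \<Longrightarrow> (e has_real_derivative u * fst (snd (G u))) (at u)"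
    and "\<And>u. u \<in> {0<..<\<delta>} \<Longrightarrow> (z has_real_derivative u * fst (snd (snd (G u)))) (at u)"
    and "\<And>u. u \<in> {0<..<\<delta>} \<Longrightarrow> (w has_real_derivative u * snd (snd (snd (G u)))) (at u)"
  shows "solves_S d q {..0} (\<lambda>t. blowup_X d p e (\<kappa> * exp t)) (\<lambda>t. blowup_Y e (\<kappa> * exp t))
    (\<lambda>t. blowup_Z z (\<kappa> * exp t)) (\<lambda>t. blowup_W w (\<kappa> * exp t))"
  unfolding solves_S_iff
proof
  fix t :: real assume "t \<in> {..0}"
  then have "\<kappa> * exp t \<le> \<kappa>"
    using assms(3) by (intro mult_left_le) auto
  moreover have "0 < \<kappa> * exp t"
    using assms(3) by simp
  ultimately have "\<kappa> * exp t \<in> {0<..<\<delta>}"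
    using assms(4) by simp
  note derivs = blowup_has_derivatives[OF assms(2) _ assms(5-8)[OF this, unfolded G_def]]
  show "((\<lambda>t. blowup_X d p e (\<kappa> * exp t)) has_real_derivative rhs_X d q (blowup_X d p e (\<kappa> * exp t))
      (blowup_Y e (\<kappa> * exp t)) (blowup_Z z (\<kappa> * exp t)) (blowup_W w (\<kappa> * exp t))) (at t within {..0}) \<and>
    ((\<lambda>t. blowup_Y e (\<kappa> * exp t)) has_real_derivative rhs_Y d (blowup_X d p e (\<kappa> * exp t))
      (blowup_Y e (\<kappa> * exp t)) (blowup_Z z (\<kappa> * exp t))) (at t within {..0}) \<and>
    ((\<lambda>t. blowup_Z z (\<kappa> * exp t)) has_real_derivative rhs_Z d q (blowup_X d p e (\<kappa> * exp t))
      (blowup_Z z (\<kappa> * exp t)) (blowup_W w (\<kappa> * exp t))) (at t within {..0}) \<and>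
    ((\<lambda>t. blowup_W w (\<kappa> * exp t)) has_real_derivative rhs_W d (blowup_X d p e (\<kappa> * exp t))
      (blowup_Z z (\<kappa> * exp t)) (blowup_W w (\<kappa> * exp t))) (at t within {..0})"
    using assms(3) by (intro conjI exp_time_change_has_derivative derivs) auto
qed

lemma desingularized_solution_exists:
  fixes d :: nat and q \<gamma> :: real
  obtains \<delta> :: real and p e z w :: "real \<Rightarrow> real" where
    "0 < \<delta>" "isCont p 0" "isCont e 0" "isCont z 0" "isCont w 0"
    "e 0 = 1" "z 0 = - \<gamma>" "w 0 = 1" "\<And>u. \<bar>e u - 1\<bar> \<le> 1/2"
    "\<And>u. u \<in> {0<..<\<delta>} \<Longrightarrow>
       ((\<lambda>v. v\<^sup>2 * p v) has_real_derivative u ^ 3 * fst (desingularized_field d q (u, p u, e u, z u, w u))) (at u)"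
    "\<And>u. u \<in> {0<..<\<delta>} \<Longrightarrow>
       (e has_real_derivative u * fst (snd (desingularized_field d q (u, p u, e u, z u, w u)))) (at u)"
    "\<And>u. u \<in> {0<..<\<delta>} \<Longrightarrow>
       (z has_real_derivative u * fst (snd (snd (desingularized_field d q (u, p u, e u, z u, w u))))) (at u)"
    "\<And>u. u \<in> {0<..<\<delta>} \<Longrightarrow>
       (w has_real_derivative u * snd (snd (snd (desingularized_field d q (u, p u, e u, z u, w u))))) (at u)"
proof -
  define c :: "real \<times> real \<times> real \<times> real" where "c = (0, 1, - \<gamma>, 1)"
  txt \<open>Weight 2 on the first component: the \<open>X\<close>-equation is solved for \<open>u\<^sup>2 p\<close>.\<close>
  define k :: "real \<times> real \<times> real \<times> real \<Rightarrow> nat" where "k b = (if b = (1, 0, 0, 0) then 2 else 0)" for b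
  have "bounded_lipschitz_on ({0..1} \<times> cball c (1/2)) (desingularized_field d q)"
    by (intro bounded_lipschitz_on_desingularized_field bounded_Times) auto
  then obtain \<delta> y where \<delta>: "0 < \<delta>" and y: "continuous_on UNIV y" "y 0 = c" "\<And>u. y u \<in> cball c (1/2)"
    and dy: "\<And>u b. u \<in> {0<..<\<delta>} \<Longrightarrow> b \<in> Basis \<Longrightarrow>
       ((\<lambda>v. v ^ k b * ((y v - c) \<bullet> b)) has_real_derivative
         u ^ (k b + 1) * (desingularized_field d q (u, y u) \<bullet> b)) (at u)"
    by (rule singular_system_local_solution[where r = "1/2" and k = k, rotated]) auto
  define p where "p u = fst (y u)" for u
  define e where "e u = fst (snd (y u))" for u
  define z where "z u = fst (snd (snd (y u)))" for u
  define w where "w u = snd (snd (snd (y u)))" for u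
  have y_eq: "y u = (p u, e u, z u, w u)" for u
    by (simp add: p_def e_def z_def w_def)
  show ?thesis
  proof (rule that[OF \<delta>])
    have "isCont y 0"
      using y(1) by (simp add: continuous_on_eq_continuous_at)
    then show "isCont p 0" "isCont e 0" "isCont z 0" "isCont w 0"
      unfolding p_def[abs_def] e_def[abs_def] z_def[abs_def] w_def[abs_def] by (auto intro!: continuous_intros)
    show "e 0 = 1" "z 0 = - \<gamma>" "w 0 = 1"
      using y(2) by (simp_all add: e_def z_def w_def c_def)
    fix u
    have "(0, 1, 0, 0) \<in> (Basis :: (real \<times> real \<times> real \<times> real) set)"
      by (simp add: Basis_prod_def zero_prod_def)
    from Basis_le_norm[OF this, of "c - y u"] show "\<bar>e u - 1\<bar> \<le> 1/2"
      using y(3)[of u] by (simp add: y_eq c_def dist_norm abs_minus_commute)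
    assume u: "u \<in> {0<..<\<delta>}"
    show "((\<lambda>v. v\<^sup>2 * p v) has_real_derivative u ^ 3 * fst (desingularized_field d q (u, p u, e u, z u, w u))) (at u)"
      using dy[OF u, of "(1, 0, 0, 0)"] by (simp add: Basis_prod_def zero_prod_def inner_prod_def k_def c_def y_eq)
    show "(e has_real_derivative u * fst (snd (desingularized_field d q (u, p u, e u, z u, w u)))) (at u)"
      using dy[OF u, of "(0, 1, 0, 0)"]
      by (simp add: Basis_prod_def zero_prod_def inner_prod_def k_def c_def y_eq
          has_real_derivative_iff_has_vector_derivative has_vector_derivative_diff_const)
    show "(z has_real_derivative u * fst (snd (snd (desingularized_field d q (u, p u, e u, z u, w u))))) (at u)"
      using dy[OF u, of "(0, 0, 1, 0)"]
      by (simp add: Basis_prod_def zero_prod_def inner_prod_def k_def c_def y_eq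
          has_real_derivative_iff_has_vector_derivative has_vector_derivative_add_const)
    show "(w has_real_derivative u * snd (snd (snd (desingularized_field d q (u, p u, e u, z u, w u))))) (at u)"
      using dy[OF u, of "(0, 0, 0, 1)"]
      by (simp add: Basis_prod_def zero_prod_def inner_prod_def k_def c_def y_eq
          has_real_derivative_iff_has_vector_derivative has_vector_derivative_diff_const)
  qed
qed

lemma blowup_asymptotics:
  fixes d :: nat and \<kappa> \<gamma> :: real and p e z w :: "real \<Rightarrow> real"
  defines "X \<equiv> \<lambda>t. blowup_X d p e (\<kappa> * exp t)" and "Y \<equiv> \<lambda>t. blowup_Y e (\<kappa> * exp t)"
    and "Z \<equiv> \<lambda>t. blowup_Z z (\<kappa> * exp t)" and "W \<equiv> \<lambda>t. blowup_W w (\<kappa> * exp t)"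
  assumes "0 < \<kappa>" "isCont p 0" "isCont e 0" "isCont z 0" "isCont w 0" "e 0 = 1" "z 0 = - \<gamma>" "w 0 = 1"
  shows "\<exists>C. \<forall>\<^sub>F t in at_bot. exp (-2 * t) * sqrt ((X t - 0)\<^sup>2 + (Z t - 1)\<^sup>2 + (W t - 0)\<^sup>2) \<le> C"
    and "\<exists>C. \<forall>\<^sub>F t in at_bot. exp (- t) * \<bar>Y t\<bar> \<le> C"
    and "((\<lambda>t. W t / (Y t)\<^sup>2) \<longlongrightarrow> 1) at_bot"
    and "((\<lambda>t. (1 - Z t) / (Y t)\<^sup>2) \<longlongrightarrow> \<gamma>) at_bot"
proof -
  have u: "((\<lambda>t. \<kappa> * exp t) \<longlongrightarrow> 0) at_bot"
    by (rule tendsto_mult_right_zero[OF exp_at_bot])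
  have lim: "((\<lambda>t. f (\<kappa> * exp t)) \<longlongrightarrow> f 0) at_bot" if "isCont f 0" for f :: "real \<Rightarrow> real"
    using isCont_tendsto_compose[OF that u] .
  have bounded: "\<exists>C. \<forall>\<^sub>F t in at_bot. f t \<le> C" if "(f \<longlongrightarrow> l) at_bot" for f :: "real \<Rightarrow> real" and l
  proof
    show "\<forall>\<^sub>F t in at_bot. f t \<le> l + 1"
      using order_tendstoD(2)[OF that, of "l + 1"] by (simp add: eventually_mono)
  qed
  have u_pos: "0 < \<kappa> * exp t" for t
    using assms(5) by simp
  have "exp (-2 * t) * sqrt ((X t - 0)\<^sup>2 + (Z t - 1)\<^sup>2 + (W t - 0)\<^sup>2)
      = \<kappa>\<^sup>2 * sqrt ((rescaled_X d (p (\<kappa> * exp t)) (e (\<kappa> * exp t)))\<^sup>2 + (z (\<kappa> * exp t))\<^sup>2 + (w (\<kappa> * exp t))\<^sup>2)"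
    for t
  proof -
    have sum_sq: "(X t - 0)\<^sup>2 + (Z t - 1)\<^sup>2 + (W t - 0)\<^sup>2
        = ((\<kappa> * exp t)\<^sup>2)\<^sup>2 * ((rescaled_X d (p (\<kappa> * exp t)) (e (\<kappa> * exp t)))\<^sup>2 + (z (\<kappa> * exp t))\<^sup>2 + (w (\<kappa> * exp t))\<^sup>2)"
      by (simp add: X_def Z_def W_def blowup_X_def blowup_Z_def blowup_W_def power_mult_distrib algebra_simps)
    have "exp (-2 * t) * exp t * exp t = 1"
      by (simp add: exp_add[symmetric])
    then have exp_u: "exp (-2 * t) * (\<kappa> * exp t)\<^sup>2 = \<kappa>\<^sup>2"
      by (simp add: power2_eq_square algebra_simps)
    show ?thesis
      by (simp only: sum_sq real_sqrt_mult real_sqrt_abs abs_power2 mult.assoc[symmetric] exp_u)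
  qed
  moreover have "((\<lambda>t. \<kappa>\<^sup>2 * sqrt ((rescaled_X d (p (\<kappa> * exp t)) (e (\<kappa> * exp t)))\<^sup>2 + (z (\<kappa> * exp t))\<^sup>2 + (w (\<kappa> * exp t))\<^sup>2))
      \<longlongrightarrow> \<kappa>\<^sup>2 * sqrt ((rescaled_X d (p 0) (e 0))\<^sup>2 + (z 0)\<^sup>2 + (w 0)\<^sup>2)) at_bot"
    unfolding rescaled_X_def using assms(6-9) by (intro tendsto_intros lim)
  ultimately show "\<exists>C. \<forall>\<^sub>F t in at_bot. exp (-2 * t) * sqrt ((X t - 0)\<^sup>2 + (Z t - 1)\<^sup>2 + (W t - 0)\<^sup>2) \<le> C"
    by (simp add: bounded)
  have "exp (- t) * \<bar>Y t\<bar> = \<kappa> * \<bar>e (\<kappa> * exp t)\<bar>" for t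
    using assms(5) by (simp add: Y_def blowup_Y_def abs_mult exp_minus field_simps)
  moreover have "((\<lambda>t. \<kappa> * \<bar>e (\<kappa> * exp t)\<bar>) \<longlongrightarrow> \<kappa> * \<bar>e 0\<bar>) at_bot"
    using assms(7) by (intro tendsto_intros lim)
  ultimately show "\<exists>C. \<forall>\<^sub>F t in at_bot. exp (- t) * \<bar>Y t\<bar> \<le> C"
    by (simp add: bounded)
  have "W t / (Y t)\<^sup>2 = w (\<kappa> * exp t) / (e (\<kappa> * exp t))\<^sup>2" for t
    using u_pos[of t] assms(5) by (simp add: W_def Y_def blowup_W_def blowup_Y_def power_mult_distrib)
  moreover have "((\<lambda>t. w (\<kappa> * exp t) / (e (\<kappa> * exp t))\<^sup>2) \<longlongrightarrow> w 0 / (e 0)\<^sup>2) at_bot"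
    using assms(7,9,10) by (intro tendsto_intros lim) auto
  ultimately show "((\<lambda>t. W t / (Y t)\<^sup>2) \<longlongrightarrow> 1) at_bot"
    using assms(10,12) by simp
  have "(1 - Z t) / (Y t)\<^sup>2 = - z (\<kappa> * exp t) / (e (\<kappa> * exp t))\<^sup>2" for t
    using u_pos[of t] assms(5) by (simp add: Z_def Y_def blowup_Z_def blowup_Y_def power_mult_distrib)
  moreover have "((\<lambda>t. - z (\<kappa> * exp t) / (e (\<kappa> * exp t))\<^sup>2) \<longlongrightarrow> - z 0 / (e 0)\<^sup>2) at_bot"
    using assms(7,8,10) by (intro tendsto_intros lim) auto
  ultimately show "((\<lambda>t. (1 - Z t) / (Y t)\<^sup>2) \<longlongrightarrow> \<gamma>) at_bot"
    using assms(10,11) by simp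
qed

lemma blowup_solution_exists:
  fixes d :: nat and q \<gamma> :: real
  assumes "d > 0"
  obtains \<kappa> :: real and p e z w :: "real \<Rightarrow> real" where
    "0 < \<kappa>" "isCont p 0" "isCont e 0" "isCont z 0" "isCont w 0"
    "e 0 = 1" "z 0 = - \<gamma>" "w 0 = 1" "\<And>u. \<bar>e u - 1\<bar> \<le> 1/2"
    "solves_S d q {..0} (\<lambda>t. blowup_X d p e (\<kappa> * exp t)) (\<lambda>t. blowup_Y e (\<kappa> * exp t))
       (\<lambda>t. blowup_Z z (\<kappa> * exp t)) (\<lambda>t. blowup_W w (\<kappa> * exp t))"
proof -
  obtain \<delta> p e z w where \<delta>: "0 < \<delta>" and props: "isCont p 0" "isCont e 0" "isCont z 0" "isCont w 0"
    "e 0 = 1" "z 0 = - \<gamma>" "w 0 = 1" "\<And>u. \<bar>e u - 1\<bar> \<le> 1/2"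
    and derivs:
      "\<And>u. u \<in> {0<..<\<delta>} \<Longrightarrow>
        ((\<lambda>v. v\<^sup>2 * p v) has_real_derivative u ^ 3 * fst (desingularized_field d q (u, p u, e u, z u, w u))) (at u)"
      "\<And>u. u \<in> {0<..<\<delta>} \<Longrightarrow>
        (e has_real_derivative u * fst (snd (desingularized_field d q (u, p u, e u, z u, w u)))) (at u)"
      "\<And>u. u \<in> {0<..<\<delta>} \<Longrightarrow>
        (z has_real_derivative u * fst (snd (snd (desingularized_field d q (u, p u, e u, z u, w u))))) (at u)"
      "\<And>u. u \<in> {0<..<\<delta>} \<Longrightarrow>
        (w has_real_derivative u * snd (snd (snd (desingularized_field d q (u, p u, e u, z u, w u))))) (at u)"
    by (rule desingularized_solution_exists[of \<gamma> d q]) blast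
  have "0 < \<delta> / 2" "\<delta> / 2 < \<delta>"
    using \<delta> by simp_all
  then show ?thesis
    using that[OF _ props solves_S_blowup[OF assms _ _ derivs]] by blast
qed

theorem corollary3p2:
  fixes d :: nat and q \<gamma> :: real
  assumes "d > 0"
  shows "\<exists>I X Y Z W.
     is_interval I \<and> {..0} \<subseteq> I \<and> solves_S d q I X Y Z W \<and>
     (\<forall>t\<in>I. Y t > 0) \<and>
     (\<exists>C. \<forall>\<^sub>F t in at_bot.
        exp (-2 * t) * sqrt ((X t - 0)^2 + (Z t - 1)^2 + (W t - 0)^2) \<le> C) \<and>
     (\<exists>C. \<forall>\<^sub>F t in at_bot. exp (- t) * \<bar>Y t\<bar> \<le> C) \<and>
     ((\<lambda>t. W t / (Y t)^2) \<longlongrightarrow> 1) at_bot \<and>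
     ((\<lambda>t. (1 - Z t) / (Y t)^2) \<longlongrightarrow> \<gamma>) at_bot"
proof -
  obtain \<kappa> p e z w where \<kappa>: "0 < \<kappa>" and cont: "isCont p 0" "isCont e 0" "isCont z 0" "isCont w 0"
    and init: "e 0 = 1" "z 0 = - \<gamma>" "w 0 = 1" and e_near_1: "\<And>u. \<bar>e u - 1\<bar> \<le> 1/2"
    and solves: "solves_S d q {..0} (\<lambda>t. blowup_X d p e (\<kappa> * exp t)) (\<lambda>t. blowup_Y e (\<kappa> * exp t))
       (\<lambda>t. blowup_Z z (\<kappa> * exp t)) (\<lambda>t. blowup_W w (\<kappa> * exp t))"
    using blowup_solution_exists[OF assms, of \<gamma> q] by blast
  have "0 < e u" for u
    using e_near_1[of u] by linarith
  then have "0 < blowup_Y e (\<kappa> * exp t)" for t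
    using \<kappa> by (simp add: blowup_Y_def)
  then show ?thesis
    using solves blowup_asymptotics[OF \<kappa> cont init]
    by (intro exI[of _ "{..0}"] exI) auto
qed

end
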